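(* Let $q:\mathsf D\to\mathbb R$ be a query with sensitivity $\Delta q$. Let $x_1,\dots,x_n$ be independent random variables with moment generating functions $M_{x_i}(t)=\mathbb E(e^{tx_i})$, and let $a_1,\dots,a_n$ be real coefficients such that $\frac1b:=\sum_{i=1}^n a_ix_i>0$ almost surely. Then the R$^2$DP Laplace mechanism $\mathcal M_q(d,b)=q(d)+\mathrm{Lap}(b)$ is $\epsilon$-differentially private with $$\epsilon=\ln\left[\frac{\sum_{j=1}^n a_j\,\mathbb E(x_j)}{\sum_{j=1}^n a_j\, M'_{x_j}(-a_j\Delta q)\prod_{i\ne j}M_{x_i}(-a_i\Delta q)}\right].$$
   Context: $\mathrm{Lap}(b)$ is the zero-mean Laplace distribution with density $\frac{1}{2b}e^{-|x|/b}$; in the R$^2$DP Laplace mechanism the scale $b$ is random (independent of the data) and, conditionally on $b$, $\mathrm{Lap}(b)$ noise is added to $q(d)$. Datasets $d,d'$ are adjacent if they differ by the data of one individual; $\Delta q=\max_{d,d'\text{ adjacent}}|q(d)-q(d')|$. A mechanism is $\epsilon$-differentially private if $\mathbb P(\mathcal M(d)\in S)\le e^\epsilon\mathbb P(\mathcal M(d')\in S)$ for all adjacent $d,d'$ and measurable $S$. $M'_{x_j}$ denotes the derivative of $M_{x_j}$. *)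

theory Defs
  imports "HOL-Probability.Probability"
begin

definition laplace_density :: "real \<Rightarrow> real \<Rightarrow> real" where
  "laplace_density b x = exp (- \<bar>x\<bar> / b) / (2 * b)"

definition lap :: "real \<Rightarrow> real measure" where
  "lap b = density lborel (\<lambda>x. ennreal (laplace_density b x))"

text \<open>Output distribution of the R2DP Laplace mechanism with true answer c:
  the random scale b (a random variable on M, independent of the data) is drawn,
  then conditionally on b the value c + Lap(b) is output.\<close>
definition R2DP_laplace :: "'a measure \<Rightarrow> ('a \<Rightarrow> real) \<Rightarrow> real \<Rightarrow> real measure" where
  "R2DP_laplace M b c = M \<bind> (\<lambda>\<omega>. distr (lap (b \<omega>)) borel (\<lambda>z. c + z))"

definition sensitivity :: "('d \<Rightarrow> 'd \<Rightarrow> bool) \<Rightarrow> ('d \<Rightarrow> real) \<Rightarrow> real" where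
  "sensitivity adj q = Sup {\<bar>q d - q d'\<bar> | d d'. adj d d'}"

definition differentially_private ::
  "('d \<Rightarrow> 'd \<Rightarrow> bool) \<Rightarrow> ('d \<Rightarrow> real measure) \<Rightarrow> real \<Rightarrow> bool" where
  "differentially_private adj mech \<epsilon> \<longleftrightarrow>
     (\<forall>d d'. adj d d' \<longrightarrow> (\<forall>S \<in> sets borel.
        measure (mech d) S \<le> exp \<epsilon> * measure (mech d') S))"

definition mgf :: "'a measure \<Rightarrow> ('a \<Rightarrow> real) \<Rightarrow> real \<Rightarrow> real" where
  "mgf M X t = (\<integral>\<omega>. exp (t * X \<omega>) \<partial>M)"

end

(* With Y = 1/b = a_1 x_1 + ... + a_n x_n, the output of the R2DP Laplace mechanism on the true
   answer c has density Phi(|z - c|)/2, where Phi(d) = E[Y exp(-d Y)].  Phi is positive and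
   decreasing on [0, oo), and since exp(-d Y) and exp(-D Y) are both decreasing functions of Y they
   are positively correlated under the weight Y (Chebyshev's association inequality):
   Phi(d) Phi(D) <= Phi(0) Phi(d + D).  For adjacent data |z - q d'| <= |z - q d| + Delta q, so the
   two output densities differ at most by the factor Phi(0) / Phi(Delta q).  Finally
   Phi(0) = sum_j a_j E(x_j), and expanding exp(-Delta q Y) into a product, independence and
   differentiation of the moment generating function under the integral give the claimed
   denominator for Phi(Delta q). *)

theory Submission
  imports Defs
begin

lemma nn_integral_laplace_le_1:
  "(\<integral>\<^sup>+u. ennreal (y * exp (- \<bar>u\<bar> * y) / 2) \<partial>lborel) \<le> 1"
proof (cases "y > 0")
  case False
  then have "ennreal (y * exp (- \<bar>u\<bar> * y) / 2) = 0" for u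
    by (simp add: ennreal_eq_0_iff mult_nonpos_nonneg)
  then show ?thesis by simp
next
  case True
  have right: "(\<integral>\<^sup>+u. ennreal (exponential_density y u) \<partial>lborel) = 1"
    using prob_space.emeasure_space_1[OF prob_space_exponential_density[OF True]]
    by (simp add: emeasure_density)
  have left: "(\<integral>\<^sup>+u. ennreal (exponential_density y (- u)) \<partial>lborel) = 1"
    using nn_integral_real_affine[of "\<lambda>u. ennreal (exponential_density y u)" "-1" 0] right by simp
  have "(\<integral>\<^sup>+u. ennreal (y * exp (- \<bar>u\<bar> * y) / 2) \<partial>lborel) \<le>
      (\<integral>\<^sup>+u. (ennreal (exponential_density y u) + ennreal (exponential_density y (- u))) / 2 \<partial>lborel)"
  proof (rule nn_integral_mono)
    fix u :: real
    have "y * exp (- \<bar>u\<bar> * y) / 2 \<le> (exponential_density y u + exponential_density y (- u)) / 2"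
      using True by (auto simp: exponential_density_def abs_if)
    then show "ennreal (y * exp (- \<bar>u\<bar> * y) / 2)
        \<le> (ennreal (exponential_density y u) + ennreal (exponential_density y (- u))) / 2"
      using True by (simp add: ennreal_leI ennreal_divide_numeral exponential_density_nonneg flip: ennreal_plus)
  qed
  also have "\<dots> = (1 + 1) / 2"
    by (simp add: nn_integral_divide nn_integral_add right left)
  also have "\<dots> = 1"
    by simp
  finally show ?thesis .
qed

lemma emeasure_shifted_lap:
  assumes A: "A \<in> sets borel"
  shows "emeasure (distr (lap (1 / y)) borel (\<lambda>z. c + z)) A =
    (\<integral>\<^sup>+z. ennreal (y * exp (- \<bar>z - c\<bar> * y) / 2) * indicator A z \<partial>lborel)"
proof -
  have shift_measurable: "(\<lambda>z. c + z) \<in> measurable (lap (1 / y)) borel"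
    unfolding lap_def by (simp add: measurable_cong_sets[OF sets_density refl])
  have preimage: "(\<lambda>z. c + z) -` A \<in> sets borel"
    using measurable_sets[of "\<lambda>z. c + z" borel borel A] A by simp
  have "emeasure (distr (lap (1 / y)) borel (\<lambda>z. c + z)) A = emeasure (lap (1 / y)) ((\<lambda>z. c + z) -` A)"
    by (subst emeasure_distr[OF shift_measurable A]) (simp add: lap_def)
  also have "\<dots> = (\<integral>\<^sup>+u. ennreal (y * exp (- \<bar>u\<bar> * y) / 2) * indicator ((\<lambda>z. c + z) -` A) u \<partial>lborel)"
    using preimage by (simp add: lap_def emeasure_density laplace_density_def ac_simps)
  also have "\<dots> = (\<integral>\<^sup>+z. ennreal (y * exp (- \<bar>z - c\<bar> * y) / 2) * indicator A z \<partial>lborel)"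
    using nn_integral_real_affine[of "\<lambda>z. ennreal (y * exp (- \<bar>z - c\<bar> * y) / 2) * indicator A z" 1 c] A
    by (simp add: indicator_def)
  finally show ?thesis .
qed

lemma subprob_space_shifted_lap: "subprob_space (distr (lap (1 / y)) borel (\<lambda>z. c + z))"
proof (rule subprob_spaceI)
  have "emeasure (distr (lap (1 / y)) borel (\<lambda>z. c + z)) UNIV =
      (\<integral>\<^sup>+z. ennreal (y * exp (- \<bar>z - c\<bar> * y) / 2) \<partial>lborel)"
    by (simp add: emeasure_shifted_lap)
  also have "\<dots> = (\<integral>\<^sup>+u. ennreal (y * exp (- \<bar>u\<bar> * y) / 2) \<partial>lborel)"
    using nn_integral_real_affine[of "\<lambda>z. ennreal (y * exp (- \<bar>z - c\<bar> * y) / 2)" 1 c] by simp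
  also have "\<dots> \<le> 1"
    by (rule nn_integral_laplace_le_1)
  finally show "emeasure (distr (lap (1 / y)) borel (\<lambda>z. c + z))
      (space (distr (lap (1 / y)) borel (\<lambda>z. c + z))) \<le> 1"
    by simp
qed simp

lemma measurable_shifted_lap:
  assumes [measurable]: "Y \<in> borel_measurable M"
  shows "(\<lambda>\<omega>. distr (lap (1 / Y \<omega>)) borel (\<lambda>z. c + z)) \<in> measurable M (subprob_algebra borel)"
proof (rule measurable_subprob_algebra)
  fix A :: "real set" assume A[measurable]: "A \<in> sets borel"
  have "(\<lambda>\<omega>. \<integral>\<^sup>+z. ennreal (Y \<omega> * exp (- \<bar>z - c\<bar> * Y \<omega>) / 2) * indicator A z \<partial>lborel)
      \<in> borel_measurable M"
    by measurable
  then show "(\<lambda>\<omega>. emeasure (distr (lap (1 / Y \<omega>)) borel (\<lambda>z. c + z)) A) \<in> borel_measurable M"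
    by (simp add: emeasure_shifted_lap[OF A])
qed (auto intro: subprob_space_shifted_lap)

text \<open>The function \<open>Phi\<close> above: \<open>R2DP_profile M Y d / 2\<close> is the output density of the R2DP
  Laplace mechanism with random scale \<open>1 / Y\<close> at distance \<open>d\<close> from the true answer.\<close>
definition R2DP_profile :: "'a measure \<Rightarrow> ('a \<Rightarrow> real) \<Rightarrow> real \<Rightarrow> real" where
  "R2DP_profile M Y d = (\<integral>\<omega>. Y \<omega> * exp (- (d * Y \<omega>)) \<partial>M)"

lemma exp_diff_mult_nonneg:
  fixes d D y y0 :: real
  assumes "0 \<le> d" "0 \<le> D"
  shows "0 \<le> (exp (- (d * y)) - exp (- (d * y0))) * (exp (- (D * y)) - exp (- (D * y0)))"
proof (cases "y \<le> y0")
  case True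
  then have "d * y \<le> d * y0" "D * y \<le> D * y0"
    using assms by (auto intro: mult_left_mono)
  then show ?thesis by simp
next
  case False
  then have "d * y0 \<le> d * y" "D * y0 \<le> D * y"
    using assms by (auto intro: mult_left_mono)
  then show ?thesis by (simp add: mult_nonpos_nonpos)
qed

locale inverse_scale = prob_space M for M :: "'a measure" +
  fixes Y :: "'a \<Rightarrow> real"
  assumes measurable_Y[measurable]: "Y \<in> borel_measurable M"
    and integrable_Y: "integrable M Y"
    and AE_Y_pos: "AE \<omega> in M. 0 < Y \<omega>"
begin

lemma integrable_R2DP_profile_integrand: "0 \<le> d \<Longrightarrow> integrable M (\<lambda>\<omega>. Y \<omega> * exp (- (d * Y \<omega>)))"
  by (rule Bochner_Integration.integrable_bound[OF integrable_Y])
    (use AE_Y_pos in \<open>auto elim!: eventually_mono simp: abs_mult mult_nonneg_nonneg\<close>)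

lemma borel_measurable_R2DP_profile[measurable]: "R2DP_profile M Y \<in> borel_measurable borel"
  unfolding R2DP_profile_def[abs_def] by measurable

lemma R2DP_profile_pos:
  assumes "0 \<le> d"
  shows "0 < R2DP_profile M Y d"
proof -
  have "AE \<omega> in M. 0 < Y \<omega> * exp (- (d * Y \<omega>))"
    using AE_Y_pos by eventually_elim simp
  then have "(\<integral>\<omega>. 0 \<partial>M) < (\<integral>\<omega>. Y \<omega> * exp (- (d * Y \<omega>)) \<partial>M)"
    using integrable_R2DP_profile_integrand[OF assms] by (intro integral_less_AE_space) (auto simp: emeasure_space_1)
  then show ?thesis
    by (simp add: R2DP_profile_def)
qed

lemma R2DP_profile_antimono:
  assumes "0 \<le> d" "d \<le> d'"
  shows "R2DP_profile M Y d' \<le> R2DP_profile M Y d"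
  unfolding R2DP_profile_def
proof (rule integral_mono_AE)
  show "integrable M (\<lambda>\<omega>. Y \<omega> * exp (- (d' * Y \<omega>)))" "integrable M (\<lambda>\<omega>. Y \<omega> * exp (- (d * Y \<omega>)))"
    using assms by (auto intro: integrable_R2DP_profile_integrand)
  show "AE \<omega> in M. Y \<omega> * exp (- (d' * Y \<omega>)) \<le> Y \<omega> * exp (- (d * Y \<omega>))"
    using AE_Y_pos by eventually_elim (use assms in \<open>auto intro: mult_left_mono mult_right_mono\<close>)
qed

text \<open>Chebyshev's association inequality for the weight \<open>Y\<close>. Both factors are compared with their
  values at the threshold \<open>y0\<close> at which \<open>exp (- D * y0)\<close> equals the \<open>Y\<close>-weighted mean
  \<open>R2DP_profile M Y D / R2DP_profile M Y 0\<close> of \<open>exp (- D * Y)\<close>.\<close>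
lemma R2DP_profile_mult_le:
  assumes d: "0 \<le> d" and D: "0 \<le> D"
  shows "R2DP_profile M Y d * R2DP_profile M Y D \<le> R2DP_profile M Y 0 * R2DP_profile M Y (d + D)"
proof (cases "D = 0")
  case True
  then show ?thesis by (simp add: mult.commute)
next
  case False
  let ?\<Phi> = "R2DP_profile M Y"
  have "0 < ?\<Phi> 0" "0 < ?\<Phi> D"
    using D by (auto intro: R2DP_profile_pos)
  define y0 where "y0 = - ln (?\<Phi> D / ?\<Phi> 0) / D"
  define A where "A = exp (- (d * y0))"
  define B where "B = exp (- (D * y0))"
  have B: "B * ?\<Phi> 0 = ?\<Phi> D"
    using False \<open>0 < ?\<Phi> 0\<close> \<open>0 < ?\<Phi> D\<close> by (simp add: B_def y0_def)
  have "0 \<le> (\<integral>\<omega>. Y \<omega> * ((exp (- (d * Y \<omega>)) - A) * (exp (- (D * Y \<omega>)) - B)) \<partial>M)"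
  proof (intro integral_nonneg_AE)
    show "AE \<omega> in M. 0 \<le> Y \<omega> * ((exp (- (d * Y \<omega>)) - A) * (exp (- (D * Y \<omega>)) - B))"
      using AE_Y_pos
    proof eventually_elim
      case (elim \<omega>)
      then show ?case
        using exp_diff_mult_nonneg[OF d D, of "Y \<omega>" y0]
        by (metis A_def B_def less_imp_le mult_nonneg_nonneg)
    qed
  qed
  also have "\<dots> = (\<integral>\<omega>. Y \<omega> * exp (- ((d + D) * Y \<omega>)) - B * (Y \<omega> * exp (- (d * Y \<omega>)))
      - A * (Y \<omega> * exp (- (D * Y \<omega>))) + A * B * Y \<omega> \<partial>M)"
    by (intro Bochner_Integration.integral_cong refl)
      (simp add: algebra_simps exp_add[symmetric])
  also have "\<dots> = ?\<Phi> (d + D) - B * ?\<Phi> d - A * ?\<Phi> D + A * B * ?\<Phi> 0"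
    using d D integrable_Y
    by (simp add: R2DP_profile_def integrable_R2DP_profile_integrand)
  finally have "B * ?\<Phi> d \<le> ?\<Phi> (d + D)"
    using B by (simp add: algebra_simps)
  then have "?\<Phi> D * ?\<Phi> d \<le> ?\<Phi> 0 * ?\<Phi> (d + D)"
    using \<open>0 < ?\<Phi> 0\<close> by (simp flip: B add: mult_left_mono mult.assoc)
  then show ?thesis
    by (simp add: mult.commute)
qed

lemma R2DP_profile_le_shift:
  assumes "0 \<le> d" "0 \<le> \<Delta>" "0 \<le> d'" "d' \<le> d + \<Delta>"
  shows "R2DP_profile M Y d \<le> R2DP_profile M Y 0 / R2DP_profile M Y \<Delta> * R2DP_profile M Y d'"
proof -
  let ?\<Phi> = "R2DP_profile M Y"
  have "?\<Phi> d * ?\<Phi> \<Delta> \<le> ?\<Phi> 0 * ?\<Phi> (d + \<Delta>)"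
    using assms by (intro R2DP_profile_mult_le)
  also have "\<dots> \<le> ?\<Phi> 0 * ?\<Phi> d'"
    using assms R2DP_profile_pos[of 0] by (intro mult_left_mono R2DP_profile_antimono) auto
  finally show ?thesis
    using R2DP_profile_pos[OF \<open>0 \<le> \<Delta>\<close>] by (simp add: field_simps)
qed

lemma emeasure_R2DP_laplace:
  assumes S[measurable]: "S \<in> sets borel"
  shows "emeasure (R2DP_laplace M (\<lambda>\<omega>. 1 / Y \<omega>) c) S =
    (\<integral>\<^sup>+z. ennreal (R2DP_profile M Y \<bar>z - c\<bar> / 2) * indicator S z \<partial>lborel)"
proof -
  interpret pair_sigma_finite M lborel
    by (intro pair_sigma_finite.intro sigma_finite_measure_axioms lborel.sigma_finite_measure_axioms)
  have mixture: "(\<integral>\<^sup>+\<omega>. ennreal (Y \<omega> * exp (- \<bar>z - c\<bar> * Y \<omega>) / 2) * indicator S z \<partial>M)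
      = ennreal (R2DP_profile M Y \<bar>z - c\<bar> / 2) * indicator S z" for z
  proof -
    have "(\<integral>\<^sup>+\<omega>. ennreal (Y \<omega> * exp (- \<bar>z - c\<bar> * Y \<omega>) / 2) \<partial>M)
        = ennreal (\<integral>\<omega>. Y \<omega> * exp (- \<bar>z - c\<bar> * Y \<omega>) / 2 \<partial>M)"
      using integrable_R2DP_profile_integrand[of "\<bar>z - c\<bar>"] AE_Y_pos
      by (intro nn_integral_eq_integral) (auto elim!: eventually_mono)
    then show ?thesis
      by (simp add: nn_integral_multc R2DP_profile_def)
  qed
  have "emeasure (R2DP_laplace M (\<lambda>\<omega>. 1 / Y \<omega>) c) S =
      (\<integral>\<^sup>+\<omega>. emeasure (distr (lap (1 / Y \<omega>)) borel (\<lambda>z. c + z)) S \<partial>M)"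
    unfolding R2DP_laplace_def
    by (rule emeasure_bind[OF not_empty measurable_shifted_lap[OF measurable_Y] S])
  also have "\<dots> = (\<integral>\<^sup>+\<omega>. \<integral>\<^sup>+z. ennreal (Y \<omega> * exp (- \<bar>z - c\<bar> * Y \<omega>) / 2) * indicator S z
      \<partial>lborel \<partial>M)"
    by (simp only: emeasure_shifted_lap[OF S])
  also have "\<dots> = (\<integral>\<^sup>+z. \<integral>\<^sup>+\<omega>. ennreal (Y \<omega> * exp (- \<bar>z - c\<bar> * Y \<omega>) / 2) * indicator S z
      \<partial>M \<partial>lborel)"
    by (rule Fubini'[symmetric]) measurable
  also have "\<dots> = (\<integral>\<^sup>+z. ennreal (R2DP_profile M Y \<bar>z - c\<bar> / 2) * indicator S z \<partial>lborel)"
    by (simp only: mixture)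
  finally show ?thesis .
qed

lemma measure_R2DP_laplace_le:
  assumes S[measurable]: "S \<in> sets borel" and K: "0 \<le> K"
    and bound: "\<And>z. R2DP_profile M Y \<bar>z - c\<bar> \<le> K * R2DP_profile M Y \<bar>z - c'\<bar>"
  shows "measure (R2DP_laplace M (\<lambda>\<omega>. 1 / Y \<omega>) c) S \<le> K * measure (R2DP_laplace M (\<lambda>\<omega>. 1 / Y \<omega>) c') S"
proof -
  have subprob: "subprob_space (R2DP_laplace M (\<lambda>\<omega>. 1 / Y \<omega>) e)" for e
    unfolding R2DP_laplace_def
    by (rule subprob_space_bind[OF subprob_space_axioms measurable_shifted_lap[OF measurable_Y]])
  interpret R: subprob_space "R2DP_laplace M (\<lambda>\<omega>. 1 / Y \<omega>) c" by (rule subprob)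
  interpret R': subprob_space "R2DP_laplace M (\<lambda>\<omega>. 1 / Y \<omega>) c'" by (rule subprob)
  have "emeasure (R2DP_laplace M (\<lambda>\<omega>. 1 / Y \<omega>) c) S
      \<le> (\<integral>\<^sup>+z. ennreal K * (ennreal (R2DP_profile M Y \<bar>z - c'\<bar> / 2) * indicator S z) \<partial>lborel)"
    unfolding emeasure_R2DP_laplace[OF S]
  proof (intro nn_integral_mono)
    fix z
    have "ennreal (R2DP_profile M Y \<bar>z - c\<bar> / 2) \<le> ennreal (K * (R2DP_profile M Y \<bar>z - c'\<bar> / 2))"
      using bound[of z] by (intro ennreal_leI) simp
    then show "ennreal (R2DP_profile M Y \<bar>z - c\<bar> / 2) * indicator S z
        \<le> ennreal K * (ennreal (R2DP_profile M Y \<bar>z - c'\<bar> / 2) * indicator S z)"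
      using K by (auto simp: indicator_def ennreal_mult' simp del: times_divide_eq_right)
  qed
  also have "\<dots> = ennreal K * emeasure (R2DP_laplace M (\<lambda>\<omega>. 1 / Y \<omega>) c') S"
    unfolding emeasure_R2DP_laplace[OF S] by (intro nn_integral_cmult) measurable
  finally show ?thesis
    using K by (simp add: R.emeasure_eq_measure R'.emeasure_eq_measure ennreal_mult[symmetric])
qed

theorem differentially_private_R2DP_laplace:
  assumes "bdd_above {\<bar>q d - q d'\<bar> | d d'. adj d d'}"
  shows "differentially_private adj (\<lambda>d. R2DP_laplace M (\<lambda>\<omega>. 1 / Y \<omega>) (q d))
    (ln (R2DP_profile M Y 0 / R2DP_profile M Y (sensitivity adj q)))"
  unfolding differentially_private_def
proof (intro allI impI ballI)
  fix d d' S
  assume "adj d d'" and S: "S \<in> sets (borel :: real measure)"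
  let ?\<Phi> = "R2DP_profile M Y" and ?\<Delta> = "sensitivity adj q"
  have "\<bar>q d - q d'\<bar> \<le> ?\<Delta>"
    unfolding sensitivity_def using \<open>adj d d'\<close> assms by (intro cSup_upper) auto
  then have "0 \<le> ?\<Delta>" by linarith
  have K: "0 < ?\<Phi> 0 / ?\<Phi> ?\<Delta>"
    using R2DP_profile_pos[of 0] R2DP_profile_pos[OF \<open>0 \<le> ?\<Delta>\<close>] by simp
  have "?\<Phi> \<bar>z - q d\<bar> \<le> ?\<Phi> 0 / ?\<Phi> ?\<Delta> * ?\<Phi> \<bar>z - q d'\<bar>" for z
    using \<open>\<bar>q d - q d'\<bar> \<le> ?\<Delta>\<close> \<open>0 \<le> ?\<Delta>\<close> by (intro R2DP_profile_le_shift) auto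
  then have "measure (R2DP_laplace M (\<lambda>\<omega>. 1 / Y \<omega>) (q d)) S
      \<le> ?\<Phi> 0 / ?\<Phi> ?\<Delta> * measure (R2DP_laplace M (\<lambda>\<omega>. 1 / Y \<omega>) (q d')) S"
    using K by (intro measure_R2DP_laplace_le[OF S]) auto
  then show "measure (R2DP_laplace M (\<lambda>\<omega>. 1 / Y \<omega>) (q d)) S
      \<le> exp (ln (?\<Phi> 0 / ?\<Phi> ?\<Delta>)) * measure (R2DP_laplace M (\<lambda>\<omega>. 1 / Y \<omega>) (q d')) S"
    using K by simp
qed

end

lemma abs_mult_exp_le:
  fixes x t t0 \<delta> :: real
  assumes "0 < \<delta>" "\<bar>t - t0\<bar> \<le> \<delta>"
  shows "\<bar>x\<bar> * exp (t * x) \<le> (exp ((t0 + 2 * \<delta>) * x) + exp ((t0 - 2 * \<delta>) * x)) / \<delta>"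
proof -
  have "(t - t0) * x \<le> \<bar>t - t0\<bar> * \<bar>x\<bar>"
    by (metis abs_ge_self abs_mult)
  also have "\<dots> \<le> \<delta> * \<bar>x\<bar>"
    using assms(2) by (rule mult_right_mono) simp
  finally have "exp (t * x) \<le> exp (t0 * x + \<delta> * \<bar>x\<bar>)"
    by (simp add: left_diff_distrib)
  moreover have "\<delta> * \<bar>x\<bar> \<le> exp (\<delta> * \<bar>x\<bar>)"
    using exp_ge_add_one_self[of "\<delta> * \<bar>x\<bar>"] by linarith
  then have "\<bar>x\<bar> \<le> exp (\<delta> * \<bar>x\<bar>) / \<delta>"
    using assms(1) by (simp add: le_divide_eq mult.commute)
  ultimately have "\<bar>x\<bar> * exp (t * x) \<le> exp (\<delta> * \<bar>x\<bar>) / \<delta> * exp (t0 * x + \<delta> * \<bar>x\<bar>)"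
    by (intro mult_mono) simp_all
  also have "\<dots> = exp (t0 * x + 2 * \<delta> * \<bar>x\<bar>) / \<delta>"
    by (simp add: mult_exp_exp)
  also have "exp (t0 * x + 2 * \<delta> * \<bar>x\<bar>) \<le> exp ((t0 + 2 * \<delta>) * x) + exp ((t0 - 2 * \<delta>) * x)"
    by (cases "0 \<le> x") (simp_all add: distrib_right left_diff_distrib)
  finally show ?thesis
    using assms(1) by (simp add: divide_right_mono)
qed

lemma abs_diff_le_derivative_bound:
  fixes g g' :: "real \<Rightarrow> real"
  assumes "\<And>s. \<bar>s - t0\<bar> < \<delta> \<Longrightarrow> (g has_real_derivative g' s) (at s)"
    and "\<And>s. \<bar>s - t0\<bar> < \<delta> \<Longrightarrow> \<bar>g' s\<bar> \<le> B" and "\<bar>t - t0\<bar> < \<delta>"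
  shows "\<bar>g t - g t0\<bar> \<le> B * \<bar>t - t0\<bar>"
proof -
  have "norm (g t - g t0) \<le> B * norm (t - t0)"
  proof (rule field_differentiable_bound[of "ball t0 \<delta>" g g'])
    fix s assume "s \<in> ball t0 \<delta>"
    then have "\<bar>s - t0\<bar> < \<delta>"
      by (simp add: dist_real_def abs_minus_commute)
    then show "(g has_field_derivative g' s) (at s within ball t0 \<delta>)" and "norm (g' s) \<le> B"
      using assms(1,2) by (auto intro: has_field_derivative_at_within)
  qed (use assms(3) in \<open>auto simp: dist_real_def abs_minus_commute\<close>)
  then show ?thesis
    by simp
qed

context
  fixes M :: "'a measure" and f f' :: "real \<Rightarrow> 'a \<Rightarrow> real" and w :: "'a \<Rightarrow> real" and t0 \<delta> :: real
  assumes integrable_f: "\<And>t. \<bar>t - t0\<bar> < \<delta> \<Longrightarrow> integrable M (f t)"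
    and derivative_f: "\<And>t \<omega>. \<bar>t - t0\<bar> < \<delta> \<Longrightarrow> \<omega> \<in> space M \<Longrightarrow>
      ((\<lambda>s. f s \<omega>) has_real_derivative f' t \<omega>) (at t)"
    and derivative_bound: "\<And>t \<omega>. \<bar>t - t0\<bar> < \<delta> \<Longrightarrow> \<omega> \<in> space M \<Longrightarrow> \<bar>f' t \<omega>\<bar> \<le> w \<omega>"
    and integrable_w: "integrable M w" and measurable_f'[measurable]: "f' t0 \<in> borel_measurable M"
begin

lemma integral_difference_quotient_tendsto:
  assumes T: "\<And>i. T i \<noteq> t0" "\<And>i. \<bar>T i - t0\<bar> < \<delta>" "T \<longlonglongrightarrow> t0"
  shows "(\<lambda>i. ((\<integral>\<omega>. f (T i) \<omega> \<partial>M) - (\<integral>\<omega>. f t0 \<omega> \<partial>M)) / (T i - t0))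
    \<longlonglongrightarrow> (\<integral>\<omega>. f' t0 \<omega> \<partial>M)"
proof -
  have "0 < \<delta>"
    using T(2)[of 0] by linarith
  have integrable_T: "integrable M (f t0)" "integrable M (f (T i))" for i
    using integrable_f T(2) \<open>0 < \<delta>\<close> by auto
  define q where "q i \<omega> = (f (T i) \<omega> - f t0 \<omega>) / (T i - t0)" for i \<omega>
  have "(\<lambda>i. \<integral>\<omega>. q i \<omega> \<partial>M) \<longlonglongrightarrow> (\<integral>\<omega>. f' t0 \<omega> \<partial>M)"
  proof (rule integral_dominated_convergence[where w=w])
    show "q i \<in> borel_measurable M" for i
      using integrable_T by (simp add: q_def[abs_def])
    show "AE \<omega> in M. (\<lambda>i. q i \<omega>) \<longlonglongrightarrow> f' t0 \<omega>"
    proof (rule AE_I2)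
      fix \<omega> assume "\<omega> \<in> space M"
      then have "((\<lambda>s. (f s \<omega> - f t0 \<omega>) / (s - t0)) \<longlongrightarrow> f' t0 \<omega>) (at t0)"
        using derivative_f[of t0] \<open>0 < \<delta>\<close> by (simp add: has_field_derivative_iff)
      then show "(\<lambda>i. q i \<omega>) \<longlonglongrightarrow> f' t0 \<omega>"
        using T unfolding tendsto_at_iff_sequentially q_def o_def by blast
    qed
    show "AE \<omega> in M. norm (q i \<omega>) \<le> w \<omega>" for i
    proof (rule AE_I2)
      fix \<omega> assume "\<omega> \<in> space M"
      then have "\<bar>f (T i) \<omega> - f t0 \<omega>\<bar> \<le> w \<omega> * \<bar>T i - t0\<bar>"
        using T(2) by (intro abs_diff_le_derivative_bound[where g'="\<lambda>s. f' s \<omega>"]) (auto intro: derivative_f derivative_bound)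
      then show "norm (q i \<omega>) \<le> w \<omega>"
        using T(1) by (simp add: q_def abs_divide divide_le_eq)
    qed
  qed (use integrable_w in simp_all)
  moreover have "(\<integral>\<omega>. q i \<omega> \<partial>M)
      = ((\<integral>\<omega>. f (T i) \<omega> \<partial>M) - (\<integral>\<omega>. f t0 \<omega> \<partial>M)) / (T i - t0)" for i
    unfolding q_def by (simp only: integral_divide_zero Bochner_Integration.integral_diff integrable_T)
  ultimately show ?thesis
    by simp
qed

lemma has_real_derivative_integral:
  assumes "0 < \<delta>"
  shows "((\<lambda>t. \<integral>\<omega>. f t \<omega> \<partial>M) has_real_derivative (\<integral>\<omega>. f' t0 \<omega> \<partial>M)) (at t0)"
  unfolding has_field_derivative_iff tendsto_at_iff_sequentially o_def
proof (intro allI impI)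
  fix T :: "nat \<Rightarrow> real"
  assume "\<forall>i. T i \<in> UNIV - {t0}" and "T \<longlonglongrightarrow> t0"
  moreover obtain N where "\<And>i. N \<le> i \<Longrightarrow> \<bar>T i - t0\<bar> < \<delta>"
    using \<open>T \<longlonglongrightarrow> t0\<close> \<open>0 < \<delta>\<close> unfolding LIMSEQ_iff by (metis real_norm_def)
  ultimately have "(\<lambda>i. ((\<integral>\<omega>. f (T (i + N)) \<omega> \<partial>M) - (\<integral>\<omega>. f t0 \<omega> \<partial>M)) / (T (i + N) - t0))
      \<longlonglongrightarrow> (\<integral>\<omega>. f' t0 \<omega> \<partial>M)"
    by (intro integral_difference_quotient_tendsto LIMSEQ_ignore_initial_segment) auto
  then show "(\<lambda>i. ((\<integral>\<omega>. f (T i) \<omega> \<partial>M) - (\<integral>\<omega>. f t0 \<omega> \<partial>M)) / (T i - t0))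
      \<longlonglongrightarrow> (\<integral>\<omega>. f' t0 \<omega> \<partial>M)"
    by (rule LIMSEQ_offset)
qed

end

lemma has_real_derivative_mgf:
  assumes [measurable]: "X \<in> borel_measurable M" and "0 < e"
    and integrable_exp: "\<And>t. \<bar>t - t0\<bar> < e \<Longrightarrow> integrable M (\<lambda>\<omega>. exp (t * X \<omega>))"
  shows "integrable M (\<lambda>\<omega>. X \<omega> * exp (t0 * X \<omega>))"
    and "(mgf M X has_real_derivative (\<integral>\<omega>. X \<omega> * exp (t0 * X \<omega>) \<partial>M)) (at t0)"
proof -
  define \<delta> where "\<delta> = e / 3"
  define w where "w \<omega> = (exp ((t0 + 2 * \<delta>) * X \<omega>) + exp ((t0 - 2 * \<delta>) * X \<omega>)) / \<delta>" for \<omega>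
  have "0 < \<delta>"
    using \<open>0 < e\<close> by (simp add: \<delta>_def)
  have "integrable M w"
    unfolding w_def using \<open>0 < e\<close>
    by (intro integrable_divide Bochner_Integration.integrable_add integrable_exp) (auto simp: \<delta>_def)
  have dominated: "\<bar>X \<omega> * exp (t * X \<omega>)\<bar> \<le> w \<omega>" if "\<bar>t - t0\<bar> \<le> \<delta>" for t \<omega>
    using abs_mult_exp_le[OF \<open>0 < \<delta>\<close> that] by (simp add: w_def abs_mult)
  show "integrable M (\<lambda>\<omega>. X \<omega> * exp (t0 * X \<omega>))"
  proof (rule Bochner_Integration.integrable_bound[OF \<open>integrable M w\<close>])
    show "AE \<omega> in M. norm (X \<omega> * exp (t0 * X \<omega>)) \<le> norm (w \<omega>)"
      using dominated[of t0] abs_ge_self \<open>0 < \<delta>\<close> by (auto intro: AE_I2 order_trans)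
  qed simp
  show "(mgf M X has_real_derivative (\<integral>\<omega>. X \<omega> * exp (t0 * X \<omega>) \<partial>M)) (at t0)"
    unfolding mgf_def[abs_def]
  proof (rule has_real_derivative_integral[OF _ _ _ \<open>integrable M w\<close> _ \<open>0 < \<delta>\<close>])
    fix t assume "\<bar>t - t0\<bar> < \<delta>"
    then show "integrable M (\<lambda>\<omega>. exp (t * X \<omega>))"
      using \<open>0 < e\<close> by (intro integrable_exp) (simp add: \<delta>_def)
    show "((\<lambda>s. exp (s * X \<omega>)) has_real_derivative X \<omega> * exp (t * X \<omega>)) (at t)" for \<omega>
      by (auto intro!: derivative_eq_intros)
    show "\<bar>X \<omega> * exp (t * X \<omega>)\<bar> \<le> w \<omega>" for \<omega>
      using \<open>\<bar>t - t0\<bar> < \<delta>\<close> by (intro dominated) simp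
  qed simp
qed

lemma (in prob_space) indep_vars_integral_mult_prod:
  fixes X :: "'i \<Rightarrow> 'a \<Rightarrow> real" and g :: "real \<Rightarrow> real" and f :: "'i \<Rightarrow> real \<Rightarrow> real"
  assumes indep: "indep_vars (\<lambda>_. borel) X I" and "finite I" "j \<in> I"
    and "g \<in> borel_measurable borel" "\<And>i. i \<in> I \<Longrightarrow> f i \<in> borel_measurable borel"
    and "integrable M (\<lambda>\<omega>. g (X j \<omega>))" "\<And>i. i \<in> I - {j} \<Longrightarrow> integrable M (\<lambda>\<omega>. f i (X i \<omega>))"
  shows "integrable M (\<lambda>\<omega>. g (X j \<omega>) * (\<Prod>i\<in>I - {j}. f i (X i \<omega>)))"
    and "(\<integral>\<omega>. g (X j \<omega>) * (\<Prod>i\<in>I - {j}. f i (X i \<omega>)) \<partial>M)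
      = (\<integral>\<omega>. g (X j \<omega>) \<partial>M) * (\<Prod>i\<in>I - {j}. \<integral>\<omega>. f i (X i \<omega>) \<partial>M)"
proof -
  define h where "h i = (if i = j then g else f i)" for i
  have indep_h: "indep_vars (\<lambda>_. borel) (\<lambda>i \<omega>. h i (X i \<omega>)) I"
    using assms(4,5) by (intro indep_vars_compose2[OF indep]) (simp add: h_def)
  have integrable_h: "integrable M (\<lambda>\<omega>. h i (X i \<omega>))" if "i \<in> I" for i
    using assms(6,7) that by (cases "i = j") (simp_all add: h_def)
  have prod_h: "(\<Prod>i\<in>I. F i) = F j * (\<Prod>i\<in>I - {j}. F i)" for F :: "'i \<Rightarrow> real"
    using \<open>finite I\<close> \<open>j \<in> I\<close> by (simp add: prod.remove)
  have h_off_j: "(\<Prod>i\<in>I - {j}. h i (X i \<omega>)) = (\<Prod>i\<in>I - {j}. f i (X i \<omega>))"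
    "(\<Prod>i\<in>I - {j}. \<integral>\<omega>. h i (X i \<omega>) \<partial>M) = (\<Prod>i\<in>I - {j}. \<integral>\<omega>. f i (X i \<omega>) \<partial>M)" for \<omega>
    by (auto intro!: prod.cong simp: h_def)
  show "integrable M (\<lambda>\<omega>. g (X j \<omega>) * (\<Prod>i\<in>I - {j}. f i (X i \<omega>)))"
    using indep_vars_integrable[OF \<open>finite I\<close> indep_h integrable_h]
    by (simp add: prod_h h_off_j) (simp add: h_def)
  show "(\<integral>\<omega>. g (X j \<omega>) * (\<Prod>i\<in>I - {j}. f i (X i \<omega>)) \<partial>M)
      = (\<integral>\<omega>. g (X j \<omega>) \<partial>M) * (\<Prod>i\<in>I - {j}. \<integral>\<omega>. f i (X i \<omega>) \<partial>M)"
    using indep_vars_lebesgue_integral[OF \<open>finite I\<close> indep_h integrable_h]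
    by (simp add: prod_h h_off_j) (simp add: h_def)
qed

lemma sum_mult_exp_sum_eq:
  fixes a x :: "'i \<Rightarrow> real"
  assumes "finite I"
  shows "(\<Sum>i\<in>I. a i * x i) * exp (- (t * (\<Sum>i\<in>I. a i * x i)))
    = (\<Sum>j\<in>I. a j * (x j * exp (- a j * t * x j) * (\<Prod>i\<in>I - {j}. exp (- a i * t * x i))))"
proof -
  have "exp (- (t * (\<Sum>i\<in>I. a i * x i))) = (\<Prod>i\<in>I. exp (- a i * t * x i))"
    using assms by (simp add: exp_sum[symmetric] sum_distrib_left sum_negf algebra_simps)
  also have "\<dots> = exp (- a j * t * x j) * (\<Prod>i\<in>I - {j}. exp (- a i * t * x i))" if "j \<in> I" for j
    using assms that by (simp add: prod.remove)
  finally show ?thesis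
    by (simp add: sum_distrib_right mult.assoc cong: sum.cong)
qed

lemma (in prob_space) R2DP_profile_indep_sum:
  fixes x :: "'i \<Rightarrow> 'a \<Rightarrow> real" and a :: "'i \<Rightarrow> real"
  assumes indep: "indep_vars (\<lambda>_. borel) x I" and "finite I"
    and mgf_near: "\<And>j. j \<in> I \<Longrightarrow>
      \<exists>e>0. \<forall>s. \<bar>s + a j * t\<bar> < e \<longrightarrow> integrable M (\<lambda>\<omega>. exp (s * x j \<omega>))"
  shows "R2DP_profile M (\<lambda>\<omega>. \<Sum>i\<in>I. a i * x i \<omega>) t
    = (\<Sum>j\<in>I. a j * deriv (mgf M (x j)) (- a j * t) * (\<Prod>i\<in>I - {j}. mgf M (x i) (- a i * t)))"
proof -
  have measurable_x[measurable]: "x i \<in> borel_measurable M" if "i \<in> I" for i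
    using indep that by (auto simp: indep_vars_def)
  have mgf_derivative: "integrable M (\<lambda>\<omega>. x j \<omega> * exp (- a j * t * x j \<omega>))"
      "deriv (mgf M (x j)) (- a j * t) = (\<integral>\<omega>. x j \<omega> * exp (- a j * t * x j \<omega>) \<partial>M)" if j: "j \<in> I" for j
  proof -
    obtain e where "0 < e" and e: "\<And>s. \<bar>s - (- a j * t)\<bar> < e \<Longrightarrow> integrable M (\<lambda>\<omega>. exp (s * x j \<omega>))"
      using mgf_near[OF j] by auto
    note mgf = has_real_derivative_mgf[OF measurable_x[OF j] \<open>0 < e\<close> e]
    show "integrable M (\<lambda>\<omega>. x j \<omega> * exp (- a j * t * x j \<omega>))"
      by (rule mgf(1))
    show "deriv (mgf M (x j)) (- a j * t) = (\<integral>\<omega>. x j \<omega> * exp (- a j * t * x j \<omega>) \<partial>M)"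
      by (rule DERIV_imp_deriv[OF mgf(2)])
  qed
  have integrable_exp: "integrable M (\<lambda>\<omega>. exp (- a i * t * x i \<omega>))" if "i \<in> I" for i
    using mgf_near[OF that] by (fastforce dest: spec[of _ "- a i * t"])
  let ?term = "\<lambda>j \<omega>. x j \<omega> * exp (- a j * t * x j \<omega>) * (\<Prod>i\<in>I - {j}. exp (- a i * t * x i \<omega>))"
  have integrable_term: "integrable M (?term j)"
    and integral_term: "(\<integral>\<omega>. ?term j \<omega> \<partial>M) = deriv (mgf M (x j)) (- a j * t) * (\<Prod>i\<in>I - {j}. mgf M (x i) (- a i * t))"
    if "j \<in> I" for j
    using indep_vars_integral_mult_prod[OF indep \<open>finite I\<close> that,
        of "\<lambda>v. v * exp (- a j * t * v)" "\<lambda>i v. exp (- a i * t * v)"]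
      mgf_derivative[OF that] integrable_exp that
    by (auto simp: mgf_def)
  have "R2DP_profile M (\<lambda>\<omega>. \<Sum>i\<in>I. a i * x i \<omega>) t = (\<integral>\<omega>. (\<Sum>j\<in>I. a j * ?term j \<omega>) \<partial>M)"
    unfolding R2DP_profile_def sum_mult_exp_sum_eq[OF \<open>finite I\<close>] ..
  also have "\<dots> = (\<Sum>j\<in>I. a j * (\<integral>\<omega>. ?term j \<omega> \<partial>M))"
    using integrable_term by (simp only: Bochner_Integration.integral_sum integrable_mult_right integral_mult_right_zero)
  also have "\<dots> = (\<Sum>j\<in>I. a j * deriv (mgf M (x j)) (- a j * t) * (\<Prod>i\<in>I - {j}. mgf M (x i) (- a i * t)))"
  proof (intro sum.cong refl)
    fix j assume "j \<in> I"
    show "a j * (\<integral>\<omega>. ?term j \<omega> \<partial>M) = a j * deriv (mgf M (x j)) (- a j * t) * (\<Prod>i\<in>I - {j}. mgf M (x i) (- a i * t))"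
      unfolding integral_term[OF \<open>j \<in> I\<close>] by (rule mult.assoc[symmetric])
  qed
  finally show ?thesis .
qed

theorem corollary4p1:
  fixes M :: "'a measure" and x :: "nat \<Rightarrow> 'a \<Rightarrow> real" and a :: "nat \<Rightarrow> real"
    and n :: nat and adj :: "'d \<Rightarrow> 'd \<Rightarrow> bool" and q :: "'d \<Rightarrow> real"
  assumes "prob_space M"
    and "bdd_above {\<bar>q d - q d'\<bar> | d d'. adj d d'}"
    and "prob_space.indep_vars M (\<lambda>_. borel) x {1..n}"
    and "\<And>j. j \<in> {1..n} \<Longrightarrow> integrable M (x j)"
    and "\<And>j. j \<in> {1..n} \<Longrightarrow> \<exists>e>0. \<forall>t. \<bar>t + a j * sensitivity adj q\<bar> < e \<longrightarrow>
             integrable M (\<lambda>\<omega>. exp (t * x j \<omega>))"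
    and "AE \<omega> in M. (\<Sum>i=1..n. a i * x i \<omega>) > 0"
  shows "differentially_private adj
           (\<lambda>d. R2DP_laplace M (\<lambda>\<omega>. 1 / (\<Sum>i=1..n. a i * x i \<omega>)) (q d))
           (ln ((\<Sum>j=1..n. a j * prob_space.expectation M (x j)) /
                (\<Sum>j=1..n. a j * deriv (mgf M (x j)) (- a j * sensitivity adj q) *
                   (\<Prod>i\<in>{1..n} - {j}. mgf M (x i) (- a i * sensitivity adj q)))))"
proof -
  interpret prob_space M by fact
  have [measurable]: "x i \<in> borel_measurable M" if "i \<in> {1..n}" for i
    using assms(3) that by (auto simp: indep_vars_def)
  interpret inverse_scale M "\<lambda>\<omega>. \<Sum>i=1..n. a i * x i \<omega>"
    using assms(4,6) by unfold_locales auto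
  have "R2DP_profile M (\<lambda>\<omega>. \<Sum>i=1..n. a i * x i \<omega>) 0 = (\<Sum>j=1..n. a j * expectation (x j))"
    using assms(4) by (simp add: R2DP_profile_def)
  moreover have "R2DP_profile M (\<lambda>\<omega>. \<Sum>i=1..n. a i * x i \<omega>) (sensitivity adj q)
      = (\<Sum>j=1..n. a j * deriv (mgf M (x j)) (- a j * sensitivity adj q) *
           (\<Prod>i\<in>{1..n} - {j}. mgf M (x i) (- a i * sensitivity adj q)))"
    using assms(5) by (intro R2DP_profile_indep_sum[OF assms(3)]) auto
  ultimately show ?thesis
    using differentially_private_R2DP_laplace[OF assms(2)] by simp
qed

end
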